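(* For every integer $m\geq 2$, $$\frac{H_{m+1}}{\log 2}-0.35<e_m<\frac{H_{m+1}}{\log 2}-0.31.$$
   Context: $H_n=\sum_{j=1}^{n}\frac1j$ denotes the $n$-th harmonic number. The sequence $(e_m)_{m\geq0}$ of rational numbers is defined by $e_0=0$ and, for $m\geq1$, $$e_m=\frac{2^{m+1}+\sum_{j=1}^{m}\binom{m+1}{j}e_{m-j}}{2^{m+1}-2}.$$ *)

theory Defs
  imports "HOL-Analysis.Analysis"
begin

function e_seq :: "nat \<Rightarrow> rat" where
  "e_seq m = (if m = 0 then 0 else
     (2 ^ (m + 1) + (\<Sum>j\<in>{1..m}. of_nat ((m + 1) choose j) * e_seq (m - j)))
       / (2 ^ (m + 1) - 2))"
  by auto
termination
  by (relation "Wellfounded.measure id") auto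

declare e_seq.simps [simp del]

end

theory Submission
  imports Defs
begin

(*
  With n = m + 1 and E n = e_(n-1), the claim is that the defect s n = E n ln 2 - H n lies
  strictly between -0.35 ln 2 and -0.31 ln 2 for n >= 3.  Since
  sum_k C(n,k) H_k = 2^n (H_n - sum_(j=1..n) 1/(j 2^j)), the defect satisfies the binomial
  recurrence of E with the forcing term 2^n (ln 2 - sum_(j=1..n) 1/(j 2^j)) + H n in [0, n + 1].
  The cases n <= 14 are checked numerically.  Beyond, induction keeps s 4, ..., s n in the window
  shrunk by the margin n^3 / (40 2^n): in the recurrence for (2^n - 2) (s n - c) the terms with
  k >= 4 have the right sign, the others contribute at most n^3/100, and the drop of the margin
  from n - 1 to n absorbs this.
*)

lemma e_seq_eq_sum_lessThan:
  assumes "1 \<le> m"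
  shows "e_seq m
    = (2 ^ (m + 1) + (\<Sum>k<m. of_nat ((m + 1) choose (k + 1)) * e_seq k)) / (2 ^ (m + 1) - 2)"
proof -
  have "(\<Sum>j=1..m. of_nat ((m + 1) choose j) * e_seq (m - j))
      = (\<Sum>k<m. of_nat ((m + 1) choose (k + 1)) * (e_seq k :: rat))"
  proof (rule sum.reindex_bij_witness[where i="\<lambda>k. m - k" and j="\<lambda>j. m - j"])
    fix j assume "j \<in> {1..m}"
    then have "(m + 1) choose (m - j + 1) = (m + 1) choose j"
      by (subst binomial_symmetric) (auto simp: Suc_diff_le)
    then show "of_nat ((m + 1) choose (m - j + 1)) * e_seq (m - j)
        = of_nat ((m + 1) choose j) * e_seq (m - j)"
      by simp
  qed auto
  with assms show ?thesis
    by (subst e_seq.simps) simp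
qed

lemma e_seq_values:
  "e_seq 0 = 0" "e_seq 1 = 2" "e_seq 2 = 7/3" "e_seq 3 = 8/3" "e_seq 4 = 133/45"
  "e_seq 5 = 16/5" "e_seq 6 = 3221/945" "e_seq 7 = 3392/945" "e_seq 8 = 100391/26775"
  "e_seq 9 = 20848/5355" "e_seq 10 = 163287/40579" "e_seq 11 = 7567072/1826055"
  "e_seq 12 = 10605587147/2492565075" "e_seq 13 = 1551804656/356080725"
proof -
  note eval = e_seq_eq_sum_lessThan lessThan_nat_numeral binomial_fact fact_numeral
  show e0: "e_seq 0 = 0" by (simp add: e_seq.simps)
  show e1: "e_seq 1 = 2" by (subst e_seq.simps) (simp add: e0)
  show e2: "e_seq 2 = 7/3" by (simp add: eval e0 e1)
  show e3: "e_seq 3 = 8/3" by (simp add: eval e0 e1 e2)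
  show e4: "e_seq 4 = 133/45" by (simp add: eval e0 e1 e2 e3)
  show e5: "e_seq 5 = 16/5" by (simp add: eval e0 e1 e2 e3 e4)
  show e6: "e_seq 6 = 3221/945" by (simp add: eval e0 e1 e2 e3 e4 e5)
  show e7: "e_seq 7 = 3392/945" by (simp add: eval e0 e1 e2 e3 e4 e5 e6)
  show e8: "e_seq 8 = 100391/26775" by (simp add: eval e0 e1 e2 e3 e4 e5 e6 e7)
  show e9: "e_seq 9 = 20848/5355" by (simp add: eval e0 e1 e2 e3 e4 e5 e6 e7 e8)
  show e10: "e_seq 10 = 163287/40579" by (simp add: eval e0 e1 e2 e3 e4 e5 e6 e7 e8 e9)
  show e11: "e_seq 11 = 7567072/1826055" by (simp add: eval e0 e1 e2 e3 e4 e5 e6 e7 e8 e9 e10)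
  show e12: "e_seq 12 = 10605587147/2492565075"
    by (simp add: eval e0 e1 e2 e3 e4 e5 e6 e7 e8 e9 e10 e11)
  show "e_seq 13 = 1551804656/356080725"
    by (simp add: eval e0 e1 e2 e3 e4 e5 e6 e7 e8 e9 e10 e11 e12)
qed

definition e_shifted :: "nat \<Rightarrow> real" where
  "e_shifted n = real_of_rat (e_seq (n - 1))"

lemma e_shifted_recurrence:
  assumes "2 \<le> n"
  shows "(2 ^ n - 2) * e_shifted n = 2 ^ n + (\<Sum>k=1..n-1. real (n choose k) * e_shifted k)"
proof -
  have "(\<Sum>k<n-1. of_nat (n choose (k + 1)) * e_seq k)
      = (\<Sum>k=1..n-1. of_nat (n choose k) * (e_seq (k - 1) :: rat))"
    by (rule sum.reindex_bij_witness[where i="\<lambda>k. k - 1" and j="\<lambda>k. k + 1"]) auto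
  moreover have "(2::rat) ^ n - 2 \<noteq> 0"
    using assms power_inject_exp[of "2::rat" n 1] by simp
  ultimately have "(2 ^ n - 2) * e_seq (n - 1)
      = 2 ^ n + (\<Sum>k=1..n-1. of_nat (n choose k) * e_seq (k - 1))"
    using assms e_seq_eq_sum_lessThan[of "n - 1"] by simp
  then have "real_of_rat ((2 ^ n - 2) * e_seq (n - 1))
      = real_of_rat (2 ^ n + (\<Sum>k=1..n-1. of_nat (n choose k) * e_seq (k - 1)))"
    by (rule arg_cong)
  then show ?thesis
    by (simp add: e_shifted_def of_rat_mult of_rat_add of_rat_sum of_rat_diff of_rat_power)
qed

lemma sum_choose_Suc:
  fixes f :: "nat \<Rightarrow> 'a::comm_semiring_1"
  shows "(\<Sum>k\<le>Suc n. of_nat (Suc n choose k) * f k)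
       = (\<Sum>k\<le>n. of_nat (n choose k) * (f k + f (Suc k)))"
proof -
  have shifted: "(\<Sum>k\<le>n. of_nat (n choose Suc k) * f (Suc k)) + f 0
      = (\<Sum>k\<le>n. of_nat (n choose k) * f k)"
  proof -
    have "(\<Sum>k\<le>Suc n. of_nat (n choose k) * f k) = (\<Sum>k\<le>n. of_nat (n choose k) * f k)"
      by (simp add: binomial_eq_0)
    then show ?thesis
      by (simp only: sum.atMost_Suc_shift) (simp add: add.commute)
  qed
  have "(\<Sum>k\<le>Suc n. of_nat (Suc n choose k) * f k)
      = f 0 + (\<Sum>k\<le>n. of_nat (n choose k) * f (Suc k)) + (\<Sum>k\<le>n. of_nat (n choose Suc k) * f (Suc k))"
    by (simp add: sum.atMost_Suc_shift sum.distrib distrib_right add.assoc del: sum.atMost_Suc)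
  also have "\<dots> = (\<Sum>k\<le>n. of_nat (n choose k) * f k) + (\<Sum>k\<le>n. of_nat (n choose k) * f (Suc k))"
    unfolding shifted[symmetric] by (simp only: ac_simps)
  also have "\<dots> = (\<Sum>k\<le>n. of_nat (n choose k) * (f k + f (Suc k)))"
    by (simp add: sum.distrib distrib_left)
  finally show ?thesis .
qed

lemma sum_choose_divide_Suc:
  "(\<Sum>k\<le>n. real (n choose k) / real (Suc k)) = (2 ^ Suc n - 1) / real (Suc n)"
proof -
  have "(\<Sum>k\<le>n. real (n choose k) / real (Suc k)) = (\<Sum>k\<le>n. real (Suc n choose Suc k)) / real (Suc n)"
    unfolding sum_divide_distrib
  proof (rule sum.cong)
    fix k
    have "real (Suc n) * real (n choose k) = real (Suc n choose Suc k) * real (Suc k)"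
      using Suc_times_binomial_eq[of n k] by (metis of_nat_mult)
    then show "real (n choose k) / real (Suc k) = real (Suc n choose Suc k) / real (Suc n)"
      by (simp add: field_simps)
  qed simp
  also have "(\<Sum>k\<le>n. real (Suc n choose Suc k)) = 2 ^ Suc n - 1"
  proof -
    have "1 + (\<Sum>k\<le>n. Suc n choose Suc k) = 2 ^ Suc n"
      using choose_row_sum[of "Suc n"] by (simp only: sum.atMost_Suc_shift) simp
    then have "real (1 + (\<Sum>k\<le>n. Suc n choose Suc k)) = 2 ^ Suc n"
      by simp
    then show ?thesis
      by (simp del: binomial_Suc_Suc)
  qed
  finally show ?thesis .
qed

lemma sum_atMost_split_ends:
  fixes g :: "nat \<Rightarrow> 'a::comm_monoid_add"
  assumes "1 \<le> n"
  shows "(\<Sum>k\<le>n. g k) = g 0 + (\<Sum>k=1..n-1. g k) + g n"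
proof -
  have "{..n} = insert 0 (insert n {1..n-1})"
    using assms by auto
  then show ?thesis
    using assms by (simp add: ac_simps)
qed

lemma sum_atLeastAtMost_split_first_three:
  fixes g :: "nat \<Rightarrow> 'a::comm_monoid_add"
  assumes "4 \<le> n"
  shows "(\<Sum>k=1..n-1. g k) = g 1 + g 2 + g 3 + (\<Sum>k\<in>{4..<n}. g k)"
proof -
  have "{1..n-1} = insert 1 (insert 2 (insert 3 {4..<n}))"
    using assms by auto
  then show ?thesis
    by (simp add: ac_simps)
qed

lemma binomial_le_pow_div_fact: "real (n choose k) \<le> real n ^ k / fact k"
proof -
  have "real (n choose k) * fact k \<le> real n ^ k"
    using binomial_fact_pow[of n k] by (metis of_nat_fact of_nat_le_iff of_nat_mult of_nat_power)
  then show ?thesis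
    by (simp add: field_simps)
qed

lemma harm_le_self: "harm n \<le> real n"
proof -
  have "harm n \<le> (\<Sum>k=1..n. 1 :: real)"
    unfolding harm_def by (rule sum_mono) (simp add: inverse_le_1_iff)
  then show ?thesis
    by simp
qed

definition ln2_partial :: "nat \<Rightarrow> real" where
  "ln2_partial n = (\<Sum>j=1..n. 1 / (real j * 2 ^ j))"

lemma sum_choose_harm:
  "(\<Sum>k\<le>n. real (n choose k) * harm k) = 2 ^ n * (harm n - ln2_partial n)"
proof (induction n)
  case 0
  then show ?case by (simp add: ln2_partial_def harm_def)
next
  case (Suc n)
  have "(\<Sum>k\<le>Suc n. real (Suc n choose k) * harm k)
      = (\<Sum>k\<le>n. real (n choose k) * (2 * harm k + 1 / real (Suc k)))"
    by (simp add: sum_choose_Suc harm_Suc inverse_eq_divide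
        del: of_nat_Suc sum.atMost_Suc binomial_Suc_Suc)
  also have "\<dots> = 2 * (\<Sum>k\<le>n. real (n choose k) * harm k) + (\<Sum>k\<le>n. real (n choose k) / real (Suc k))"
    by (simp add: sum.distrib distrib_left sum_distrib_left mult_ac del: of_nat_Suc)
  also have "\<dots> = 2 * (2 ^ n * (harm n - ln2_partial n)) + (2 ^ Suc n - 1) / real (Suc n)"
    unfolding Suc.IH sum_choose_divide_Suc ..
  also have "\<dots> = 2 ^ Suc n * (harm (Suc n) - ln2_partial (Suc n))"
    by (simp add: harm_Suc ln2_partial_def field_simps del: of_nat_Suc)
  finally show ?case .
qed

lemma ln2_sums: "(\<lambda>j. 1 / (real j * 2 ^ j)) sums ln 2"
proof -
  have "(\<lambda>j. - ((1/2) ^ j / real j)) sums ln (1 - 1/2 :: real)"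
    using ln_series'[of "-1/2"] by simp
  then have "(\<lambda>j. (1/2) ^ j / real j) sums ln 2"
    using sums_minus by (fastforce simp: ln_div)
  then show ?thesis
    by (simp add: field_simps)
qed

lemma ln2_partial_tail_bounds:
  "0 \<le> 2 ^ n * (ln 2 - ln2_partial n)" "2 ^ n * (ln 2 - ln2_partial n) \<le> 1 / real (Suc n)"
proof -
  define f :: "nat \<Rightarrow> real" where "f j = 1 / (real j * 2 ^ j)" for j
  have "(\<Sum>j<Suc n. f j) = ln2_partial n"
    by (simp add: f_def ln2_partial_def lessThan_Suc_atMost atLeast0AtMost[symmetric]
        sum.atLeast_Suc_atMost)
  then have tail: "(\<lambda>i. f (i + Suc n)) sums (ln 2 - ln2_partial n)"
    using sums_split_initial_segment[OF ln2_sums[folded f_def], of "Suc n"] by simp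
  have "0 \<le> ln 2 - ln2_partial n"
    by (rule sums_le[OF _ sums_zero tail]) (simp add: f_def)
  then show "0 \<le> 2 ^ n * (ln 2 - ln2_partial n)"
    by simp
  have geometric: "(\<lambda>i. (1/2) ^ i / (real (Suc n) * 2 ^ Suc n)) sums (1 / (real (Suc n) * 2 ^ n))"
    using sums_divide[OF geometric_sums[of "1/2::real"], of "real (Suc n) * 2 ^ Suc n"] by simp
  have "f (i + Suc n) \<le> (1/2) ^ i / (real (Suc n) * 2 ^ Suc n)" for i
    by (simp add: f_def power_add power_one_over frac_le)
  then have "ln 2 - ln2_partial n \<le> 1 / (real (Suc n) * 2 ^ n)"
    by (rule sums_le[OF _ tail geometric])
  from mult_left_mono[OF this, of "2 ^ n"]
  show "2 ^ n * (ln 2 - ln2_partial n) \<le> 1 / real (Suc n)"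
    by simp
qed

lemma ln2_bounds: "0.6931 \<le> ln (2::real)" "ln (2::real) \<le> 0.6932"
  using ln_approx_bounds[of 2 4] by (simp_all add: eval_nat_numeral)

definition defect :: "nat \<Rightarrow> real" where
  "defect n = ln 2 * e_shifted n - harm n"

lemma defect_recurrence:
  assumes "2 \<le> n"
  shows "(2 ^ n - 2) * (defect n - c)
       = 2 ^ n * (ln 2 - ln2_partial n) + harm n + (\<Sum>k=1..n-1. real (n choose k) * (defect k - c))"
proof -
  have choose_interior: "(\<Sum>k=1..n-1. real (n choose k)) = 2 ^ n - 2"
    using sum_atMost_split_ends[of n "\<lambda>k. real (n choose k)"] choose_row_sum[of n] assms
    by (simp flip: of_nat_sum)
  have harm_interior:
    "(\<Sum>k=1..n-1. real (n choose k) * harm k) = 2 ^ n * (harm n - ln2_partial n) - harm n"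
    using sum_atMost_split_ends[of n "\<lambda>k. real (n choose k) * harm k"] sum_choose_harm[of n] assms
    by (simp add: harm_expand(1))
  have "real (n choose k) * (defect k - c)
      = ln 2 * (real (n choose k) * e_shifted k) - real (n choose k) * harm k
        - c * real (n choose k)" for k
    by (simp add: defect_def algebra_simps)
  then have "(\<Sum>k=1..n-1. real (n choose k) * (defect k - c))
      = ln 2 * (\<Sum>k=1..n-1. real (n choose k) * e_shifted k)
        - (\<Sum>k=1..n-1. real (n choose k) * harm k) - c * (\<Sum>k=1..n-1. real (n choose k))"
    by (simp only: sum_subtractf sum_distrib_left)
  moreover have "ln 2 * ((2 ^ n - 2) * e_shifted n)
      = ln 2 * (2 ^ n + (\<Sum>k=1..n-1. real (n choose k) * e_shifted k))"
    using e_shifted_recurrence[OF assms] by simp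
  ultimately show ?thesis
    unfolding choose_interior harm_interior by (simp add: defect_def algebra_simps)
qed

lemma defect_small:
  "defect 1 = -1" "defect 2 = 2 * ln 2 - 3/2" "defect 3 = 7/3 * ln 2 - 11/6"
  by (simp_all add: defect_def e_shifted_def e_seq_values e_seq_values(2)[unfolded One_nat_def]
      of_rat_divide harm_expand)

definition in_window :: "real \<Rightarrow> real \<Rightarrow> bool" where
  "in_window \<delta> x \<longleftrightarrow> -0.35 * ln 2 + \<delta> \<le> x \<and> x \<le> -0.31 * ln 2 - \<delta>"

definition margin :: "nat \<Rightarrow> real" where
  "margin n = real n ^ 3 / (40 * 2 ^ n)"

lemma defect_in_window_if:
  assumes "0 \<le> e_shifted k"
    and "harm k + \<delta> \<le> 0.6931 * (e_shifted k + 0.35)"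
    and "0.6932 * (e_shifted k + 0.31) \<le> harm k - \<delta>"
  shows "in_window \<delta> (defect k)"
proof -
  have "0.6931 * (e_shifted k + 0.35) \<le> ln 2 * e_shifted k + 0.35 * ln 2"
    using mult_right_mono[OF ln2_bounds(1), of "e_shifted k + 0.35"] assms(1)
    by (simp add: algebra_simps)
  moreover have "ln 2 * e_shifted k + 0.31 * ln 2 \<le> 0.6932 * (e_shifted k + 0.31)"
    using mult_right_mono[OF ln2_bounds(2), of "e_shifted k + 0.31"] assms(1)
    by (simp add: algebra_simps)
  ultimately show ?thesis
    using assms(2,3) unfolding in_window_def defect_def by linarith
qed

lemma defect_window_base:
  assumes "k \<in> {4..14}"
  shows "in_window (margin 14) (defect k)"
proof -
  have "k \<in> set [4..<15]"
    using assms by (simp add: atLeastAtMost_upt)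
  then show ?thesis
    by (auto intro!: defect_in_window_if
        simp: e_shifted_def e_seq_values of_rat_divide harm_expand margin_def)
qed

lemma defect_upper_step:
  assumes n: "15 \<le> n" and hi: "-0.22 \<le> hi" "hi \<le> -0.21"
    and below: "\<forall>k\<in>{4..<n}. defect k \<le> hi"
  shows "(2 ^ n - 2) * (defect n - hi) \<le> real n ^ 3 / 100"
proof -
  have recurrence: "(2 ^ n - 2) * (defect n - hi) = 2 ^ n * (ln 2 - ln2_partial n) + harm n
      + real (n choose 1) * (defect 1 - hi) + real (n choose 2) * (defect 2 - hi)
      + real (n choose 3) * (defect 3 - hi) + (\<Sum>k\<in>{4..<n}. real (n choose k) * (defect k - hi))"
    using defect_recurrence[of n hi] n
      sum_atLeastAtMost_split_first_three[of n "\<lambda>k. real (n choose k) * (defect k - hi)"]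
    by simp
  have tail: "2 ^ n * (ln 2 - ln2_partial n) \<le> 1"
    using ln2_partial_tail_bounds(2)[of n] order_trans by fastforce
  have t1: "real (n choose 1) * (defect 1 - hi) \<le> -78/100 * real n"
    using mult_left_mono[of "-1 - hi" "-78/100" "real n"] hi defect_small by simp
  have t2: "real (n choose 2) * (defect 2 - hi) \<le> real n ^ 2 / 2 * (107/1000)"
    using binomial_le_pow_div_fact[of n 2] defect_small ln2_bounds hi
    by (intro mult_mono) (simp_all add: fact_numeral)
  have "real (n choose 3) * (defect 3 - hi) \<le> real (n choose 3) * (42/10000)"
    using defect_small ln2_bounds hi by (intro mult_left_mono) simp_all
  also have "\<dots> \<le> real n ^ 3 / 6 * (42/10000)"
    using binomial_le_pow_div_fact[of n 3] by (intro mult_right_mono) (simp_all add: fact_numeral)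
  finally have t3: "real (n choose 3) * (defect 3 - hi) \<le> real n ^ 3 / 6 * (42/10000)" .
  have rest: "(\<Sum>k\<in>{4..<n}. real (n choose k) * (defect k - hi)) \<le> 0"
    using below by (intro sum_nonpos mult_nonneg_nonpos) auto
  have "15 * real n \<le> real n ^ 2" "15 * real n ^ 2 \<le> real n ^ 3"
    using n by (simp_all add: power2_eq_square power3_eq_cube mult_right_mono)
  then show ?thesis
    unfolding recurrence using n harm_le_self[of n] tail t1 t2 t3 rest
    by linarith
qed

lemma defect_lower_step:
  assumes n: "4 \<le> n" and lo: "lo \<le> -0.23"
    and above: "\<forall>k\<in>{4..<n}. lo \<le> defect k"
  shows "- real n \<le> (2 ^ n - 2) * (defect n - lo)"
proof -
  have recurrence: "(2 ^ n - 2) * (defect n - lo) = 2 ^ n * (ln 2 - ln2_partial n) + harm n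
      + real (n choose 1) * (defect 1 - lo) + real (n choose 2) * (defect 2 - lo)
      + real (n choose 3) * (defect 3 - lo) + (\<Sum>k\<in>{4..<n}. real (n choose k) * (defect k - lo))"
    using defect_recurrence[of n lo] n
      sum_atLeastAtMost_split_first_three[of n "\<lambda>k. real (n choose k) * (defect k - lo)"]
    by simp
  have t1: "- real n \<le> real (n choose 1) * (defect 1 - lo)"
    using mult_left_mono[of "-1" "-1 - lo" "real n"] lo defect_small by simp
  have t23: "0 \<le> real (n choose 2) * (defect 2 - lo)" "0 \<le> real (n choose 3) * (defect 3 - lo)"
    using lo defect_small ln2_bounds by simp_all
  have rest: "0 \<le> (\<Sum>k\<in>{4..<n}. real (n choose k) * (defect k - lo))"
    using above by (intro sum_nonneg) auto
  show ?thesis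
    unfolding recurrence
    using harm_nonneg[of n, where 'a = real] ln2_partial_tail_bounds(1)[of n] t1 t23 rest
    by linarith
qed

lemma cube_Suc_le:
  fixes x :: real
  assumes "14 \<le> x"
  shows "3 * (x + 1) ^ 3 \<le> 4 * x ^ 3"
proof -
  have "14 * x \<le> x ^ 2" "14 * x ^ 2 \<le> x ^ 3"
    using assms by (simp_all add: power2_eq_square power3_eq_cube mult_right_mono)
  moreover have "(x + 1) ^ 3 = x ^ 3 + 3 * x ^ 2 + 3 * x + 1"
    by (simp add: power3_eq_cube power2_eq_square algebra_simps)
  ultimately show ?thesis
    using assms by linarith
qed

lemma margin_decrement:
  assumes "14 \<le> n"
  shows "real (Suc n) ^ 3 / 100 \<le> (2 ^ Suc n - 2) * (margin n - margin (Suc n))"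
proof -
  define x where "x = real n"
  define p :: real where "p = 2 ^ n"
  define D where "D = 2 * x ^ 3 - (x + 1) ^ 3"
  have "2 ^ 14 \<le> p"
    unfolding p_def using assms by (intro power_increasing) auto
  then have p: "18/10 * p \<le> 2 * p - 2" "0 < p"
    by simp_all
  have D: "(x + 1) ^ 3 / 2 \<le> D"
    using cube_Suc_le[of x] assms by (simp add: D_def x_def)
  have "18/10 * p * ((x + 1) ^ 3 / 2) \<le> (2 * p - 2) * D"
    using p D by (intro mult_mono) (simp_all add: x_def)
  moreover have "0 \<le> p * (x + 1) ^ 3"
    using p by (simp add: x_def)
  ultimately have "(x + 1) ^ 3 / 100 \<le> (2 * p - 2) * D / (80 * p)"
    using p by (simp add: field_simps)
  also have "\<dots> = (2 ^ Suc n - 2) * (margin n - margin (Suc n))"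
    using p by (simp add: margin_def D_def x_def p_def field_simps)
  finally show ?thesis
    by (simp add: x_def add.commute)
qed

lemma margin_Suc_le:
  assumes "14 \<le> n"
  shows "margin (Suc n) \<le> margin n"
proof -
  have "0 < (2::real) ^ Suc n - 2"
    using assms power_inject_exp[of "2::real" "Suc n" 1] by simp
  moreover have "0 \<le> (2 ^ Suc n - 2) * (margin n - margin (Suc n))"
    using margin_decrement[OF assms] zero_le_power[of "real (Suc n)" 3] by linarith
  ultimately show ?thesis
    by (simp add: zero_le_mult_iff)
qed

lemma margin_antimono:
  assumes "14 \<le> m" "m \<le> n"
  shows "margin n \<le> margin m"
  using assms(2)
proof (induction n rule: dec_induct)
  case (step n)
  then show ?case
    using assms(1) margin_Suc_le[of n] by linarith
qed simp

lemma in_window_antimono: "\<delta>' \<le> \<delta> \<Longrightarrow> in_window \<delta> x \<Longrightarrow> in_window \<delta>' x"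
  by (auto simp: in_window_def)

lemma defect_window_Suc:
  assumes n: "14 \<le> n" and window: "\<forall>k\<in>{4..n}. in_window (margin n) (defect k)"
  shows "in_window (margin (Suc n)) (defect (Suc n))"
proof -
  define lo where "lo = -0.35 * ln 2 + margin n"
  define hi where "hi = -0.31 * ln 2 - margin n"
  have "0 \<le> margin n" "margin n \<le> 343/81920"
    using margin_antimono[OF _ n] by (simp_all add: margin_def)
  then have lo: "lo \<le> -0.23" and hi: "-0.22 \<le> hi" "hi \<le> -0.21"
    using ln2_bounds by (simp_all add: lo_def hi_def)
  have between: "\<forall>k\<in>{4..<Suc n}. lo \<le> defect k \<and> defect k \<le> hi"
    using window by (auto simp: in_window_def lo_def hi_def)
  define \<Delta> where "\<Delta> = margin n - margin (Suc n)"
  have pos: "0 < (2::real) ^ Suc n - 2"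
    using n power_inject_exp[of "2::real" "Suc n" 1] by simp
  have "100 \<le> real (Suc n) ^ 2"
    using n power_mono[of 15 "real (Suc n)" 2] by simp
  from mult_right_mono[OF this, of "real (Suc n)"]
  have "real (Suc n) \<le> real (Suc n) ^ 3 / 100"
    by (simp add: power2_eq_square power3_eq_cube)
  moreover have "(2 ^ Suc n - 2) * (defect (Suc n) - hi) \<le> real (Suc n) ^ 3 / 100"
    using n hi between by (intro defect_upper_step) auto
  moreover have "- real (Suc n) \<le> (2 ^ Suc n - 2) * (defect (Suc n) - lo)"
    using n lo between by (intro defect_lower_step) auto
  moreover have "real (Suc n) ^ 3 / 100 \<le> (2 ^ Suc n - 2) * \<Delta>"
    unfolding \<Delta>_def using margin_decrement[OF n] .
  ultimately have "(2 ^ Suc n - 2) * (defect (Suc n) - hi) \<le> (2 ^ Suc n - 2) * \<Delta>"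
    "(2 ^ Suc n - 2) * (- \<Delta>) \<le> (2 ^ Suc n - 2) * (defect (Suc n) - lo)"
    by simp_all
  then have "defect (Suc n) - hi \<le> \<Delta>" "- \<Delta> \<le> defect (Suc n) - lo"
    using pos by (simp_all only: mult_le_cancel_left_pos)
  then show ?thesis
    by (simp add: in_window_def lo_def hi_def \<Delta>_def)
qed

lemma defect_window:
  assumes "14 \<le> n"
  shows "\<forall>k\<in>{4..n}. in_window (margin n) (defect k)"
  using assms
proof (induction n rule: nat_induct_at_least)
  case base
  then show ?case
    using defect_window_base by blast
next
  case (Suc n)
  then have "\<forall>k\<in>{4..n}. in_window (margin (Suc n)) (defect k)"
    using in_window_antimono margin_Suc_le by blast
  moreover have "in_window (margin (Suc n)) (defect (Suc n))"
    using Suc by (rule defect_window_Suc)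
  ultimately show ?case
    by (auto simp: le_Suc_eq)
qed

lemma defect_bounds:
  assumes "3 \<le> n"
  shows "-0.35 * ln 2 < defect n \<and> defect n < -0.31 * ln 2"
proof (cases "n = 3")
  case True
  then show ?thesis
    using defect_small ln2_bounds by simp
next
  case False
  define N where "N = max n 14"
  have "in_window (margin N) (defect n)"
    using defect_window[of N] assms False by (simp add: N_def)
  moreover have "0 < margin N"
    by (simp add: margin_def N_def)
  ultimately show ?thesis
    by (auto simp: in_window_def)
qed

theorem proposition2:
  fixes m :: nat
  assumes "m \<ge> 2"
  shows "harm (m + 1) / ln 2 - 0.35 < real_of_rat (e_seq m)
       \<and> real_of_rat (e_seq m) < harm (m + 1) / ln 2 - 0.31"
proof -
  have "real_of_rat (e_seq m) = (defect (m + 1) + harm (m + 1)) / ln 2"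
    by (simp add: defect_def e_shifted_def)
  moreover have "-0.35 < defect (m + 1) / ln 2" "defect (m + 1) / ln 2 < -0.31"
    using defect_bounds[of "m + 1"] assms by (simp_all add: less_divide_eq divide_less_eq)
  ultimately show ?thesis
    by (simp add: add_divide_distrib)
qed

end
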